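(* Let $N\geq 2$, $\kappa=0$, and let $\mu_L>0>\mu_R$ be fixed (independent of $\beta$). Let $\rho_\beta$ be the unique stationary distribution of the boundary driven exclusion process on $\{0,1\}^N$ at inverse temperature $\beta$. Then for $x\in\{0,1\}^N$, $$\rho_\beta(x)\asymp 1 \quad\text{if and only if}\quad x(1)=1 \text{ and } x(N)=0.$$
   Context: Configurations are $x\in\{0,1\}^N$; $x(i)=1$ means site $i$ is occupied. For $i\neq j$, $x^{i,j}$ is $x$ with occupations of sites $i,j$ exchanged; for $i\in\{1,N\}$, $x^i$ is $x$ with the occupation of site $i$ flipped. The boundary driven exclusion process (the boundary driven Kawasaki process with zero coupling) is the continuous-time Markov jump process whose only transitions are: for $|i-j|=1$ with $x(i)\neq x(j)$, $x\to x^{i,j}$ at rate $1$; and for $i\in\{1,N\}$, $x\to x^i$ at rate $\exp[\tfrac{\beta\mu_i}{2}(1-2x(i))]$, with $\mu_1=\mu_L$, $\mu_N=\mu_R$. It has a unique stationary distribution $\rho_\beta$. Notation: $f(\beta)\asymp 1$ means $\lim_{\beta\to\infty}\frac1\beta\log f(\beta)=0$. *)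

theory Defs
  imports "HOL-Analysis.Analysis"
begin

text \<open>Configurations x in {0,1}^N are represented as functions nat => bool
  that are False outside the sites {1..N}; x i = True means site i is occupied.\<close>

definition configs :: "nat \<Rightarrow> (nat \<Rightarrow> bool) set" where
  "configs N = {x. \<forall>i. x i \<longrightarrow> i \<in> {1..N}}"

definition occ :: "(nat \<Rightarrow> bool) \<Rightarrow> nat \<Rightarrow> real" where
  "occ x i = (if x i then 1 else 0)"

definition exch :: "(nat \<Rightarrow> bool) \<Rightarrow> nat \<Rightarrow> nat \<Rightarrow> (nat \<Rightarrow> bool)" where
  "exch x i j = x(i := x j, j := x i)"

definition flip :: "(nat \<Rightarrow> bool) \<Rightarrow> nat \<Rightarrow> (nat \<Rightarrow> bool)" where
  "flip x i = x(i := \<not> x i)"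

text \<open>Jump rate from x to y (x different from y) of the boundary driven exclusion process
  (boundary driven Kawasaki process with zero coupling) on N sites, at inverse temperature
  beta, with boundary chemical potentials muL (site 1) and muR (site N).\<close>
definition rate :: "nat \<Rightarrow> real \<Rightarrow> real \<Rightarrow> real \<Rightarrow> (nat \<Rightarrow> bool) \<Rightarrow> (nat \<Rightarrow> bool) \<Rightarrow> real" where
  "rate N \<beta> muL muR x y =
     (if x = y then 0 else
       (if \<exists>i. 1 \<le> i \<and> i < N \<and> x i \<noteq> x (Suc i) \<and> y = exch x i (Suc i) then 1 else 0)
     + (if y = flip x 1 then exp (\<beta> * muL / 2 * (1 - 2 * occ x 1)) else 0)
     + (if y = flip x N then exp (\<beta> * muR / 2 * (1 - 2 * occ x N)) else 0))"

definition stationary ::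
  "nat \<Rightarrow> real \<Rightarrow> real \<Rightarrow> real \<Rightarrow> ((nat \<Rightarrow> bool) \<Rightarrow> real) \<Rightarrow> bool" where
  "stationary N \<beta> muL muR \<rho> \<longleftrightarrow>
     (\<forall>x\<in>configs N. \<rho> x \<ge> 0) \<and>
     (\<Sum>x\<in>configs N. \<rho> x) = 1 \<and>
     (\<forall>x\<in>configs N.
        (\<Sum>y\<in>configs N. \<rho> y * rate N \<beta> muL muR y x)
          = \<rho> x * (\<Sum>y\<in>configs N. rate N \<beta> muL muR x y))"

definition asymp_one :: "(real \<Rightarrow> real) \<Rightarrow> bool" where
  "asymp_one f \<longleftrightarrow> ((\<lambda>\<beta>. ln (f \<beta>) / \<beta>) \<longlongrightarrow> 0) at_top"

end

theory Submission
  imports Defs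
begin

text \<open>Stationarity bounds the flow into a configuration x along any single transition:
  \<open>\<rho>(y) r(y,x) \<le> \<rho>(x) R(x)\<close>, where \<open>R(x)\<close> is the total exit rate of x. Ground configurations
  (site 1 occupied, site N empty) have \<open>R \<le> N + 2\<close> uniformly in \<open>\<beta>\<close>, while every other configuration
  has a boundary flip towards a ground configuration at rate at least \<open>exp (\<beta> min(\<mu>\<^sub>L, -\<mu>\<^sub>R) / 2)\<close>;
  hence non-ground configurations carry mass \<open>O(exp (-\<beta> min(\<mu>\<^sub>L, -\<mu>\<^sub>R) / 2))\<close>. The ground
  configurations are connected by moves along which \<open>\<rho>\<close> drops at most by the \<open>\<beta>\<close>-independent factor
  \<open>(N + 2)\<^sup>2\<close>, so once the non-ground mass is negligible every ground configuration has mass bounded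
  below by a positive constant.\<close>

section \<open>Transition rates and stationary measures\<close>

lemma finite_configs: "finite (configs N)"
proof (rule finite_subset)
  show "configs N \<subseteq> (\<lambda>S i. i \<in> S) ` Pow {1..N}"
  proof
    fix x assume "x \<in> configs N"
    then have "x = (\<lambda>i. i \<in> {i. x i})" "{i. x i} \<in> Pow {1..N}"
      by (auto simp: configs_def)
    then show "x \<in> (\<lambda>S i. i \<in> S) ` Pow {1..N}" by blast
  qed
qed simp

lemma flip_flip [simp]: "flip (flip x k) k = x"
  by (simp add: flip_def)

lemma rate_nonneg: "rate N \<beta> a b x y \<ge> 0"
  by (simp add: rate_def)

lemma rate_exch_ge_1:
  assumes "1 \<le> i" "i < N" "x i \<noteq> x (Suc i)"
  shows "rate N \<beta> a b x (exch x i (Suc i)) \<ge> 1"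
proof -
  have "x \<noteq> exch x i (Suc i)"
    using assms(3) by (auto simp: exch_def fun_eq_iff)
  then show ?thesis
    using assms by (auto simp: rate_def)
qed

lemma rate_flip_first_ge: "rate N \<beta> a b x (flip x 1) \<ge> exp (\<beta> * a / 2 * (1 - 2 * occ x 1))"
  by (auto simp: rate_def flip_def fun_eq_iff add_increasing add_increasing2)

lemma rate_flip_last_ge: "rate N \<beta> a b x (flip x N) \<ge> exp (\<beta> * b / 2 * (1 - 2 * occ x N))"
  by (auto simp: rate_def flip_def fun_eq_iff add_increasing add_increasing2)

definition out_rate :: "nat \<Rightarrow> real \<Rightarrow> real \<Rightarrow> real \<Rightarrow> (nat \<Rightarrow> bool) \<Rightarrow> real" where
  "out_rate N \<beta> a b x = (\<Sum>y\<in>configs N. rate N \<beta> a b x y)"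

lemma out_rate_le:
  "out_rate N \<beta> a b x \<le> real N + exp (\<beta> * a / 2 * (1 - 2 * occ x 1)) + exp (\<beta> * b / 2 * (1 - 2 * occ x N))"
proof -
  let ?P = "\<lambda>y. \<exists>i. 1 \<le> i \<and> i < N \<and> x i \<noteq> x (Suc i) \<and> y = exch x i (Suc i)"
  let ?e1 = "exp (\<beta> * a / 2 * (1 - 2 * occ x 1))" and ?eN = "exp (\<beta> * b / 2 * (1 - 2 * occ x N))"
  have "out_rate N \<beta> a b x \<le> (\<Sum>y\<in>configs N. (if ?P y then 1 else 0)
      + (if y = flip x 1 then ?e1 else 0) + (if y = flip x N then ?eN else 0))"
    unfolding out_rate_def by (rule sum_mono) (auto simp: rate_def)
  also have "\<dots> = real (card {y\<in>configs N. ?P y})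
      + (\<Sum>y\<in>configs N. if y = flip x 1 then ?e1 else 0) + (\<Sum>y\<in>configs N. if y = flip x N then ?eN else 0)"
    by (simp add: sum.distrib sum.If_cases finite_configs Int_def)
  also have "\<dots> \<le> real N + ?e1 + ?eN"
  proof -
    have "card {y\<in>configs N. ?P y} \<le> card ((\<lambda>i. exch x i (Suc i)) ` {1..<N})"
      by (rule card_mono) auto
    also have "\<dots> \<le> N"
      using card_image_le[of "{1..<N}" "\<lambda>i. exch x i (Suc i)"] by simp
    finally show ?thesis
      by (intro add_mono) (auto simp: sum.delta finite_configs)
  qed
  finally show ?thesis .
qed

lemma stationary_nonneg: "stationary N \<beta> a b \<rho> \<Longrightarrow> x \<in> configs N \<Longrightarrow> \<rho> x \<ge> 0"
  by (simp add: stationary_def)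

lemma stationary_le_1:
  assumes "stationary N \<beta> a b \<rho>" "x \<in> configs N"
  shows "\<rho> x \<le> 1"
proof -
  have "\<rho> x \<le> (\<Sum>y\<in>configs N. \<rho> y)"
    by (rule member_le_sum) (use assms stationary_nonneg finite_configs in auto)
  with assms(1) show ?thesis by (simp add: stationary_def)
qed

lemma stationary_exists_ge_inverse_card:
  assumes "stationary N \<beta> a b \<rho>"
  shows "\<exists>y\<in>configs N. 1 / real (card (configs N)) \<le> \<rho> y"
proof (rule ccontr)
  assume "\<not> ?thesis"
  then have "(\<Sum>y\<in>configs N. \<rho> y) < (\<Sum>y\<in>configs N. 1 / real (card (configs N)))"
    using assms by (intro sum_strict_mono finite_configs) (auto simp: stationary_def)
  with assms show False by (auto simp: stationary_def split: if_splits)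
qed

lemma stationary_flow_le:
  assumes "stationary N \<beta> a b \<rho>" "y \<in> configs N" "x \<in> configs N"
  shows "\<rho> y * rate N \<beta> a b y x \<le> \<rho> x * out_rate N \<beta> a b x"
proof -
  have "\<rho> y * rate N \<beta> a b y x \<le> (\<Sum>z\<in>configs N. \<rho> z * rate N \<beta> a b z x)"
    by (rule member_le_sum[of y _ "\<lambda>z. \<rho> z * rate N \<beta> a b z x"])
       (use assms stationary_nonneg rate_nonneg finite_configs in auto)
  also have "\<dots> = \<rho> x * out_rate N \<beta> a b x"
    using assms(1,3) by (simp add: stationary_def out_rate_def)
  finally show ?thesis .
qed

lemma stationary_flow_bound:
  assumes "stationary N \<beta> a b \<rho>" "y \<in> configs N" "x \<in> configs N"
    and "G \<le> rate N \<beta> a b y x" "out_rate N \<beta> a b x \<le> C"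
  shows "\<rho> y * G \<le> \<rho> x * C"
proof -
  have "\<rho> y * G \<le> \<rho> y * rate N \<beta> a b y x"
    using assms(4) stationary_nonneg[OF assms(1,2)] by (rule mult_left_mono)
  also have "\<dots> \<le> \<rho> x * out_rate N \<beta> a b x" by (rule stationary_flow_le[OF assms(1-3)])
  also have "\<dots> \<le> \<rho> x * C"
    using assms(5) stationary_nonneg[OF assms(1,3)] by (rule mult_left_mono)
  finally show ?thesis .
qed

lemma stationary_pos_if_rate_pos:
  assumes "stationary N \<beta> a b \<rho>" "y \<in> configs N" "x \<in> configs N"
    and "\<rho> y > 0" "rate N \<beta> a b y x > 0"
  shows "\<rho> x > 0"
proof -
  have "0 < \<rho> y * rate N \<beta> a b y x" using assms(4,5) by simp
  also have "\<dots> \<le> \<rho> x * out_rate N \<beta> a b x" by (rule stationary_flow_le[OF assms(1-3)])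
  finally show ?thesis
    using stationary_nonneg[OF assms(1,3)] by (auto simp: zero_less_mult_iff)
qed

section \<open>Exponential scale criteria\<close>

lemma tendsto_const_div_at_top: "((\<lambda>\<beta>::real. c / \<beta>) \<longlongrightarrow> 0) at_top"
  by (rule tendsto_divide_0[OF tendsto_const filterlim_at_top_imp_at_infinity[OF filterlim_ident]])

lemma tendsto_exp_decay: "0 < a \<Longrightarrow> ((\<lambda>\<beta>::real. C * exp (- (\<beta> * a))) \<longlongrightarrow> 0) at_top"
proof -
  assume "0 < a"
  then have "LIM \<beta> at_top. (- a) * \<beta> :> at_bot"
    by (intro filterlim_tendsto_neg_mult_at_bot[OF tendsto_const] filterlim_ident) simp
  then have "((\<lambda>\<beta>::real. exp (- (\<beta> * a))) \<longlongrightarrow> 0) at_top"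
    by (auto intro: filterlim_compose[OF exp_at_bot] simp: mult.commute)
  then show ?thesis using tendsto_mult_right_zero by blast
qed

lemma asymp_one_if_bounded:
  assumes "0 < m" and "eventually (\<lambda>\<beta>. m \<le> f \<beta> \<and> f \<beta> \<le> M) at_top"
  shows "asymp_one f"
  unfolding asymp_one_def
proof (rule tendsto_sandwich)
  show "eventually (\<lambda>\<beta>. ln m / \<beta> \<le> ln (f \<beta>) / \<beta>) at_top"
    "eventually (\<lambda>\<beta>. ln (f \<beta>) / \<beta> \<le> ln M / \<beta>) at_top"
    using assms(2) eventually_gt_at_top[of 0]
    by (eventually_elim, use assms(1) in \<open>auto intro!: divide_right_mono\<close>)+
qed (rule tendsto_const_div_at_top)+

lemma not_asymp_one_if_exp_decay:
  assumes "0 < a" and "eventually (\<lambda>\<beta>. 0 < f \<beta> \<and> f \<beta> \<le> C * exp (- (\<beta> * a))) at_top"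
  shows "\<not> asymp_one f"
proof
  assume "asymp_one f"
  moreover have "eventually (\<lambda>\<beta>. ln (f \<beta>) / \<beta> \<le> ln C / \<beta> - a) at_top"
    using assms(2) eventually_gt_at_top[of 0]
  proof eventually_elim
    case (elim \<beta>)
    then have "0 < C * exp (- (\<beta> * a))" by linarith
    then have "0 < C" by (simp add: zero_less_mult_iff)
    have "ln (f \<beta>) \<le> ln (C * exp (- (\<beta> * a)))"
      using elim by (intro ln_mono) auto
    also have "\<dots> = ln C - \<beta> * a" using \<open>0 < C\<close> by (simp add: ln_mult)
    finally show ?case
      using elim(2) divide_right_mono[of _ _ \<beta>] by (fastforce simp: diff_divide_distrib)
  qed
  ultimately have "0 \<le> 0 - a"
    unfolding asymp_one_def
    by (intro tendsto_le[OF trivial_limit_at_top_linorder tendsto_diff[OF tendsto_const_div_at_top tendsto_const]])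
  with assms(1) show False by simp
qed

section \<open>Connectivity of the ground configurations\<close>

definition ground_configs :: "nat \<Rightarrow> (nat \<Rightarrow> bool) set" where
  "ground_configs N = {x \<in> configs N. x 1 \<and> \<not> x N}"

text \<open>Injection at site 2 and ejection at site \<open>N - 1\<close> are not transitions of the process: each is
  realised by an exchange across the boundary bond followed by the fast boundary flip.\<close>

definition ground_move :: "nat \<Rightarrow> (nat \<Rightarrow> bool) \<Rightarrow> (nat \<Rightarrow> bool) \<Rightarrow> bool" where
  "ground_move N y x \<longleftrightarrow> y \<in> ground_configs N \<and> x \<in> ground_configs N \<and>
     ((\<exists>i. 2 \<le> i \<and> Suc i < N \<and> y i \<noteq> y (Suc i) \<and> x = exch y i (Suc i))
      \<or> (\<not> y 2 \<and> x = y(2 := True))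
      \<or> (y (N - 1) \<and> x = y(N - 1 := False)))"

definition interior_config :: "nat set \<Rightarrow> nat \<Rightarrow> bool" where
  "interior_config S = (\<lambda>j. j = 1 \<or> j \<in> S)"

lemma interior_config_in_ground_configs:
  "2 \<le> N \<Longrightarrow> S \<subseteq> {2..<N} \<Longrightarrow> interior_config S \<in> ground_configs N"
  by (auto simp: interior_config_def ground_configs_def configs_def)

lemma ground_config_eq_interior_config:
  assumes "x \<in> ground_configs N"
  shows "x = interior_config {j \<in> {2..<N}. x j}"
proof
  fix j
  have "x j \<Longrightarrow> 1 \<le> j \<and> j < N" "x 1"
    using assms by (auto simp: ground_configs_def configs_def le_less)
  then show "x j = interior_config {j \<in> {2..<N}. x j} j"
    by (cases "j = 1") (auto simp: interior_config_def)
qed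

lemma ground_move_exchI:
  "y \<in> ground_configs N \<Longrightarrow> x \<in> ground_configs N \<Longrightarrow> 2 \<le> i \<Longrightarrow> Suc i < N \<Longrightarrow>
    y i \<noteq> y (Suc i) \<Longrightarrow> x = exch y i (Suc i) \<Longrightarrow> ground_move N y x"
  unfolding ground_move_def by blast

lemma ground_move_injectI:
  "y \<in> ground_configs N \<Longrightarrow> x \<in> ground_configs N \<Longrightarrow> \<not> y 2 \<Longrightarrow> x = y(2 := True) \<Longrightarrow> ground_move N y x"
  unfolding ground_move_def by blast

lemma ground_move_ejectI:
  "y \<in> ground_configs N \<Longrightarrow> x \<in> ground_configs N \<Longrightarrow> y (N - 1) \<Longrightarrow> x = y(N - 1 := False)
    \<Longrightarrow> ground_move N y x"
  unfolding ground_move_def by blast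

lemma ground_move_eject_rightmost:
  assumes "S \<subseteq> {2..<N}" "b \<in> {2..<N}" "\<forall>a\<in>S. a < b"
  shows "(ground_move N)\<^sup>*\<^sup>* (interior_config (insert b S)) (interior_config S)"
  using assms(2,3)
proof (induction "N - Suc b" arbitrary: b)
  case 0
  let ?y = "interior_config (insert b S)"
  have b: "b = N - 1" "b \<notin> S" "b \<noteq> 1" using 0 by auto
  then have "interior_config S = ?y(N - 1 := False)"
    by (auto simp: interior_config_def fun_eq_iff)
  moreover have "?y (N - 1)" by (simp add: b(1) interior_config_def)
  ultimately show ?case
    using assms(1) 0 by (intro r_into_rtranclp ground_move_ejectI interior_config_in_ground_configs) auto
next
  case (Suc d)
  let ?y = "interior_config (insert b S)" and ?x = "interior_config (insert (Suc b) S)"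
  have "Suc b \<in> {2..<N}" "\<forall>a\<in>S. a < Suc b" "d = N - Suc (Suc b)" using Suc by auto
  then have reach: "(ground_move N)\<^sup>*\<^sup>* ?x (interior_config S)"
    using Suc.hyps(1) by blast
  have "b \<notin> S" "Suc b \<notin> S" "2 \<le> b" using Suc.prems by auto
  then have "?x = exch ?y b (Suc b)" "?y b \<noteq> ?y (Suc b)"
    by (auto simp: interior_config_def exch_def fun_eq_iff)
  then have "ground_move N ?y ?x"
    using assms(1) Suc by (intro ground_move_exchI interior_config_in_ground_configs) auto
  then show ?case using reach by (rule converse_rtranclp_into_rtranclp)
qed

lemma ground_move_inject_leftmost:
  assumes "S \<subseteq> {2..<N}" "b \<in> {2..<N}" "\<forall>a\<in>S. b < a"
  shows "(ground_move N)\<^sup>*\<^sup>* (interior_config S) (interior_config (insert b S))"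
  using assms(2,3)
proof (induction "b - 2" arbitrary: b)
  case 0
  let ?y = "interior_config S"
  have b: "b = 2" "b \<notin> S" using 0 by auto
  then have "interior_config (insert b S) = ?y(2 := True)" "\<not> ?y 2"
    by (auto simp: interior_config_def fun_eq_iff)
  then show ?case
    using assms(1) 0 by (intro r_into_rtranclp ground_move_injectI interior_config_in_ground_configs) auto
next
  case (Suc d)
  define c where "c = b - 1"
  have b: "b = Suc c" and c: "c \<in> {2..<N}" "\<forall>a\<in>S. c < a" "d = c - 2"
    using Suc unfolding c_def by auto
  let ?y = "interior_config (insert c S)" and ?x = "interior_config (insert b S)"
  have reach: "(ground_move N)\<^sup>*\<^sup>* (interior_config S) ?y"
    using Suc.hyps(1) c by blast
  have "b \<notin> S" "c \<notin> S" "2 \<le> c" using Suc.prems c by auto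
  then have "?x = exch ?y c (Suc c)" "?y c \<noteq> ?y (Suc c)"
    using b by (auto simp: interior_config_def exch_def fun_eq_iff)
  then have "ground_move N ?y ?x"
    using assms(1) Suc.prems c b by (intro ground_move_exchI interior_config_in_ground_configs) auto
  then show ?case by (rule rtranclp.rtrancl_into_rtrancl[OF reach])
qed

lemma ground_reaches_interior_empty:
  assumes "S \<subseteq> {2..<N}"
  shows "(ground_move N)\<^sup>*\<^sup>* (interior_config S) (interior_config {})"
proof -
  have "finite S" using assms finite_subset by blast
  then show ?thesis
    using assms
  proof (induction S rule: finite_linorder_max_induct)
    case (insert b S)
    then show ?case
      using ground_move_eject_rightmost[of S N b] by (meson insert_subset rtranclp_trans)
  qed simp
qed

lemma interior_empty_reaches_ground:
  assumes "S \<subseteq> {2..<N}"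
  shows "(ground_move N)\<^sup>*\<^sup>* (interior_config {}) (interior_config S)"
proof -
  have "finite S" using assms finite_subset by blast
  then show ?thesis
    using assms
  proof (induction S rule: finite_linorder_min_induct)
    case (insert b S)
    then show ?case
      using ground_move_inject_leftmost[of S N b] by (meson insert_subset rtranclp_trans)
  qed simp
qed

lemma ground_configs_connected:
  assumes "y \<in> ground_configs N" "x \<in> ground_configs N"
  shows "(ground_move N)\<^sup>*\<^sup>* y x"
proof -
  have "(ground_move N)\<^sup>*\<^sup>* (interior_config {j \<in> {2..<N}. y j}) (interior_config {})"
    by (rule ground_reaches_interior_empty) auto
  moreover have "(ground_move N)\<^sup>*\<^sup>* (interior_config {}) (interior_config {j \<in> {2..<N}. x j})"
    by (rule interior_empty_reaches_ground) auto
  ultimately show ?thesis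
    using ground_config_eq_interior_config assms by (metis rtranclp_trans)
qed

section \<open>Estimates at fixed inverse temperature\<close>

locale exclusion_stationary =
  fixes N :: nat and muL muR \<beta> :: real and \<rho> :: "(nat \<Rightarrow> bool) \<Rightarrow> real"
  assumes two_le_N: "2 \<le> N" and muL_pos: "0 < muL" and muR_neg: "muR < 0" and beta_pos: "0 < \<beta>"
    and stationary: "stationary N \<beta> muL muR \<rho>"
begin

lemma one_le_exp_boundary: "1 \<le> exp (\<beta> * muL / 2)" "1 \<le> exp (- (\<beta> * muR / 2))"
  using beta_pos muL_pos muR_neg by (simp_all add: mult_nonneg_nonpos)

lemma out_rate_le_boundary:
  "out_rate N \<beta> muL muR x
     \<le> real N + (if x 1 then 1 else exp (\<beta> * muL / 2)) + (if x N then exp (- (\<beta> * muR / 2)) else 1)"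
proof -
  have "exp (\<beta> * muL / 2 * (1 - 2 * occ x 1)) \<le> (if x 1 then 1 else exp (\<beta> * muL / 2))"
    "exp (\<beta> * muR / 2 * (1 - 2 * occ x N)) \<le> (if x N then exp (- (\<beta> * muR / 2)) else 1)"
    using beta_pos muL_pos muR_neg by (auto simp: occ_def mult_nonneg_nonpos)
  then show ?thesis using out_rate_le[of N \<beta> muL muR x] by linarith
qed

lemma out_rate_ground: "x \<in> ground_configs N \<Longrightarrow> out_rate N \<beta> muL muR x \<le> real N + 2"
  using out_rate_le_boundary[of x] by (simp add: ground_configs_def)

lemma rate_flip_first_empty: "\<not> x 1 \<Longrightarrow> exp (\<beta> * muL / 2) \<le> rate N \<beta> muL muR x (flip x 1)"
  using rate_flip_first_ge[where \<beta>=\<beta> and a=muL and b=muR and N=N and x=x] by (simp add: occ_def)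

lemma rate_flip_last_full: "x N \<Longrightarrow> exp (- (\<beta> * muR / 2)) \<le> rate N \<beta> muL muR x (flip x N)"
  using rate_flip_last_ge[where \<beta>=\<beta> and a=muL and b=muR and N=N and x=x] by (simp add: occ_def)

lemma rate_flip_boundary_pos: "k = 1 \<or> k = N \<Longrightarrow> 0 < rate N \<beta> muL muR x (flip x k)"
  using rate_flip_first_ge[where \<beta>=\<beta> and a=muL and b=muR and N=N and x=x]
    rate_flip_last_ge[where \<beta>=\<beta> and a=muL and b=muR and N=N and x=x]
  by (auto intro: less_le_trans[OF exp_gt_zero])

lemma ratio_via_boundary_flip:
  assumes "y \<in> configs N" "z \<in> configs N" "x \<in> ground_configs N"
    and "1 \<le> rate N \<beta> muL muR y z" and "1 \<le> G"
    and "out_rate N \<beta> muL muR z \<le> real N + 1 + G" and "G \<le> rate N \<beta> muL muR z x"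
  shows "\<rho> y \<le> (real N + 2)^2 * \<rho> x"
proof -
  have x: "x \<in> configs N" using assms(3) by (simp add: ground_configs_def)
  have "real N + 1 + G \<le> G * (real N + 2)"
    using mult_right_mono[of 1 G "real N + 1"] assms(5) by (simp add: algebra_simps)
  then have "out_rate N \<beta> muL muR z \<le> G * (real N + 2)" using assms(6) by linarith
  then have "\<rho> y * 1 \<le> \<rho> z * (G * (real N + 2))"
    by (rule stationary_flow_bound[OF stationary assms(1,2,4)])
  also have "\<dots> = (\<rho> z * G) * (real N + 2)" by simp
  also have "\<dots> \<le> (\<rho> x * (real N + 2)) * (real N + 2)"
    using stationary_flow_bound[OF stationary assms(2) x assms(7) out_rate_ground[OF assms(3)]]
    by (rule mult_right_mono) simp
  finally show ?thesis by (simp add: power2_eq_square algebra_simps)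
qed

lemma inject_ratio:
  assumes "y \<in> ground_configs N" "x \<in> ground_configs N" "\<not> y 2" "x = y(2 := True)"
  shows "\<rho> y \<le> (real N + 2)^2 * \<rho> x"
proof -
  define z where "z = exch y 1 (Suc 1)"
  have y: "y \<in> configs N" "y 1" "\<not> y N" and "N \<noteq> 2"
    using assms by (auto simp: ground_configs_def)
  then have z: "z \<in> configs N" "\<not> z 1" "\<not> z N" "flip z 1 = x"
    using assms(3,4) two_le_N
    by (auto simp: z_def exch_def flip_def configs_def fun_eq_iff numeral_2_eq_2)
  have "1 \<le> rate N \<beta> muL muR y z"
    unfolding z_def using y assms(3) two_le_N by (intro rate_exch_ge_1) (auto simp: numeral_2_eq_2)
  moreover have "out_rate N \<beta> muL muR z \<le> real N + 1 + exp (\<beta> * muL / 2)"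
    using out_rate_le_boundary[of z] z by simp
  moreover have "exp (\<beta> * muL / 2) \<le> rate N \<beta> muL muR z x"
    using rate_flip_first_empty[of z] z by simp
  ultimately show ?thesis
    using ratio_via_boundary_flip[OF y(1) z(1) assms(2)] one_le_exp_boundary(1) by blast
qed

lemma eject_ratio:
  assumes "y \<in> ground_configs N" "x \<in> ground_configs N" "y (N - 1)" "x = y(N - 1 := False)"
  shows "\<rho> y \<le> (real N + 2)^2 * \<rho> x"
proof -
  define z where "z = exch y (N - 1) (Suc (N - 1))"
  have y: "y \<in> configs N" "y 1" "\<not> y N" and N: "Suc (N - 1) = N" "N - 1 \<noteq> 1"
    using assms two_le_N by (auto simp: ground_configs_def)
  then have z: "z \<in> configs N" "z 1" "z N" "flip z N = x"
    using assms(3,4) two_le_N by (auto simp: z_def exch_def flip_def configs_def fun_eq_iff)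
  have "1 \<le> rate N \<beta> muL muR y z"
    unfolding z_def using y assms(3) N two_le_N by (intro rate_exch_ge_1) auto
  moreover have "out_rate N \<beta> muL muR z \<le> real N + 1 + exp (- (\<beta> * muR / 2))"
    using out_rate_le_boundary[of z] z by simp
  moreover have "exp (- (\<beta> * muR / 2)) \<le> rate N \<beta> muL muR z x"
    using rate_flip_last_full[of z] z by simp
  ultimately show ?thesis
    using ratio_via_boundary_flip[OF y(1) z(1) assms(2)] one_le_exp_boundary(2) by blast
qed

lemma ground_move_ratio:
  assumes "ground_move N y x"
  shows "\<rho> y \<le> (real N + 2)^2 * \<rho> x"
proof -
  have y: "y \<in> ground_configs N" "y \<in> configs N" and x: "x \<in> ground_configs N" "x \<in> configs N"
    using assms by (auto simp: ground_move_def ground_configs_def)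
  consider (exch) i where "2 \<le> i" "Suc i < N" "y i \<noteq> y (Suc i)" "x = exch y i (Suc i)"
    | (inject) "\<not> y 2" "x = y(2 := True)"
    | (eject) "y (N - 1)" "x = y(N - 1 := False)"
    using assms unfolding ground_move_def by blast
  then show ?thesis
  proof cases
    case exch
    then have "\<rho> y * 1 \<le> \<rho> x * (real N + 2)"
      using rate_exch_ge_1[of i N y \<beta> muL muR]
      by (intro stationary_flow_bound[OF stationary y(2) x(2) _ out_rate_ground[OF x(1)]]) auto
    also have "\<dots> \<le> \<rho> x * (real N + 2)^2"
      using stationary_nonneg[OF stationary x(2)] by (intro mult_left_mono) (auto simp: power2_eq_square)
    finally show ?thesis by (simp add: mult.commute)
  qed (use inject_ratio eject_ratio y(1) x(1) in blast)+
qed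

lemma mass_both_ends_occupied_le:
  assumes "x \<in> configs N" "x 1" "x N"
  shows "\<rho> x * exp (- (\<beta> * muR / 2)) \<le> real N + 2"
proof -
  have w: "flip x N \<in> ground_configs N"
    using assms two_le_N by (auto simp: ground_configs_def flip_def configs_def)
  then have "\<rho> x * exp (- (\<beta> * muR / 2)) \<le> \<rho> (flip x N) * (real N + 2)"
    using assms by (intro stationary_flow_bound[OF stationary] rate_flip_last_full out_rate_ground)
      (auto simp: ground_configs_def)
  also have "\<dots> \<le> 1 * (real N + 2)"
    using w stationary_le_1[OF stationary] by (intro mult_right_mono) (auto simp: ground_configs_def)
  finally show ?thesis by simp
qed

lemma mass_first_empty_le:
  assumes "x \<in> configs N" "\<not> x 1"
  shows "\<rho> x * exp (\<beta> * muL / 2) \<le> (real N + 2)^2"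
proof -
  define w where "w = flip x 1"
  have w: "w \<in> configs N" "w 1" "w N = x N"
    using assms two_le_N by (auto simp: w_def flip_def configs_def)
  have "\<rho> x * exp (\<beta> * muL / 2) \<le> \<rho> w * out_rate N \<beta> muL muR w"
    using assms w unfolding w_def by (intro stationary_flow_bound[OF stationary] rate_flip_first_empty) auto
  also have "\<dots> \<le> (real N + 2)^2"
  proof (cases "x N")
    case False
    then have "\<rho> w * out_rate N \<beta> muL muR w \<le> 1 * (real N + 2)"
      using w stationary_le_1[OF stationary] out_rate_ground[of w]
      by (intro mult_mono) (auto simp: ground_configs_def out_rate_def sum_nonneg rate_nonneg)
    also have "\<dots> \<le> (real N + 2)^2" by (simp add: power2_eq_square)
    finally show ?thesis .
  next
    case True
    have "out_rate N \<beta> muL muR w \<le> real N + 1 + exp (- (\<beta> * muR / 2))"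
      using out_rate_le_boundary[of w] w True by simp
    also have "\<dots> \<le> exp (- (\<beta> * muR / 2)) * (real N + 2)"
      using mult_right_mono[OF one_le_exp_boundary(2), of "real N + 1"] by (simp add: algebra_simps)
    finally have "\<rho> w * out_rate N \<beta> muL muR w \<le> (\<rho> w * exp (- (\<beta> * muR / 2))) * (real N + 2)"
      using stationary_nonneg[OF stationary w(1)] by (simp add: mult_left_mono mult.assoc)
    also have "\<dots> \<le> (real N + 2) * (real N + 2)"
      using mass_both_ends_occupied_le[of w] w True by (intro mult_right_mono) auto
    finally show ?thesis by (simp add: power2_eq_square)
  qed
  finally show ?thesis .
qed

lemma mass_non_ground_le:
  assumes "x \<in> configs N" "x \<notin> ground_configs N"
  shows "\<rho> x \<le> (real N + 2)^2 * exp (- (\<beta> * (min muL (- muR) / 2)))"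
proof -
  have decay: "exp (- c) \<le> exp (- (\<beta> * (min muL (- muR) / 2)))"
    if "c = \<beta> * muL / 2 \<or> c = - (\<beta> * muR / 2)" for c
  proof -
    have "\<beta> * min muL (- muR) \<le> \<beta> * muL" "\<beta> * min muL (- muR) \<le> \<beta> * (- muR)"
      by (rule mult_left_mono; use beta_pos in simp)+
    then show ?thesis using that by auto
  qed
  have "\<rho> x \<le> (real N + 2)^2 * exp (- (\<beta> * muL / 2)) \<or> \<rho> x \<le> (real N + 2) * exp (\<beta> * muR / 2)"
  proof (cases "x 1")
    case False
    then show ?thesis
      using mass_first_empty_le[OF assms(1)] by (simp add: exp_minus field_simps)
  next
    case True
    then have "x N" using assms by (simp add: ground_configs_def)
    then show ?thesis
      using mass_both_ends_occupied_le[OF assms(1) True] by (simp add: exp_minus field_simps)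
  qed
  moreover have "(real N + 2) * exp (\<beta> * muR / 2) \<le> (real N + 2)^2 * exp (\<beta> * muR / 2)"
    by (intro mult_right_mono) (auto simp: power2_eq_square)
  ultimately show ?thesis
    using decay[of "\<beta> * muL / 2"] decay[of "- (\<beta> * muR / 2)"]
    by (smt (verit, best) mult_left_mono zero_le_power2)
qed

text \<open>Positivity is needed below because \<open>ln 0 = 0\<close>: a vanishing mass would satisfy \<open>asymp_one\<close>.\<close>

lemma pos_if_ground_pos:
  assumes "\<forall>w\<in>ground_configs N. 0 < \<rho> w" "x \<in> configs N"
  shows "0 < \<rho> x"
proof -
  have last: "0 < \<rho> u" if "u \<in> configs N" "u 1" for u
  proof (cases "u N")
    case False
    then show ?thesis using assms(1) that by (simp add: ground_configs_def)
  next
    case True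
    have "flip u N \<in> ground_configs N"
      using that True two_le_N by (auto simp: ground_configs_def flip_def configs_def)
    then show ?thesis
      using stationary_pos_if_rate_pos[OF stationary _ that(1), of "flip u N"] assms(1)
        rate_flip_boundary_pos[of N "flip u N"]
      by (simp add: ground_configs_def)
  qed
  show ?thesis
  proof (cases "x 1")
    case False
    have "flip x 1 \<in> configs N" "flip x 1 1"
      using assms(2) False two_le_N by (auto simp: flip_def configs_def)
    then show ?thesis
      using stationary_pos_if_rate_pos[OF stationary _ assms(2), of "flip x 1"] last
        rate_flip_boundary_pos[of 1 "flip x 1"]
      by simp
  qed (use last assms(2) in blast)
qed

end

section \<open>The low temperature limit\<close>

locale exclusion_stationary_family =
  fixes N :: nat and muL muR :: real and \<rho> :: "real \<Rightarrow> (nat \<Rightarrow> bool) \<Rightarrow> real"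
  assumes two_le_N: "2 \<le> N" and muL_pos: "0 < muL" and muR_neg: "muR < 0"
    and stationary_family: "\<And>\<beta>. 0 < \<beta> \<Longrightarrow> stationary N \<beta> muL muR (\<rho> \<beta>)"
begin

lemma stationary_at: "0 < \<beta> \<Longrightarrow> exclusion_stationary N muL muR \<beta> (\<rho> \<beta>)"
  using two_le_N muL_pos muR_neg stationary_family by unfold_locales

lemma ground_reach_ratio:
  assumes "(ground_move N)\<^sup>*\<^sup>* y x"
  shows "\<exists>k. \<forall>\<beta>>0. \<rho> \<beta> y \<le> ((real N + 2)^2)^k * \<rho> \<beta> x"
  using assms
proof (induction rule: rtranclp_induct)
  case (step z x)
  then obtain k where k: "\<forall>\<beta>>0. \<rho> \<beta> y \<le> ((real N + 2)^2)^k * \<rho> \<beta> z" by blast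
  have "\<rho> \<beta> y \<le> ((real N + 2)^2)^Suc k * \<rho> \<beta> x" if "0 < \<beta>" for \<beta>
  proof -
    have "\<rho> \<beta> y \<le> ((real N + 2)^2)^k * \<rho> \<beta> z" using k that by blast
    also have "\<dots> \<le> ((real N + 2)^2)^k * ((real N + 2)^2 * \<rho> \<beta> x)"
      using exclusion_stationary.ground_move_ratio[OF stationary_at[OF that] step(2)]
      by (rule mult_left_mono) simp
    finally show ?thesis by (simp add: mult_ac)
  qed
  then show ?case by blast
qed (auto intro: exI[of _ 0])

lemma ground_ratio_uniform:
  assumes "x \<in> ground_configs N"
  shows "\<exists>K. \<forall>y\<in>ground_configs N. \<forall>\<beta>>0. \<rho> \<beta> y \<le> ((real N + 2)^2)^K * \<rho> \<beta> x"
proof -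
  have "eventually (\<lambda>k. \<forall>\<beta>>0. \<rho> \<beta> y \<le> ((real N + 2)^2)^k * \<rho> \<beta> x) sequentially"
    if y: "y \<in> ground_configs N" for y
  proof -
    obtain k where k: "\<forall>\<beta>>0. \<rho> \<beta> y \<le> ((real N + 2)^2)^k * \<rho> \<beta> x"
      using ground_reach_ratio[OF ground_configs_connected[OF y assms]] by blast
    show ?thesis unfolding eventually_sequentially
    proof (intro exI allI impI)
      fix k' :: nat and \<beta> :: real assume "k \<le> k'" "0 < \<beta>"
      moreover have "0 \<le> \<rho> \<beta> x"
        using assms stationary_nonneg[OF stationary_family] \<open>0 < \<beta>\<close> by (simp add: ground_configs_def)
      moreover have "((real N + 2)^2)^k \<le> ((real N + 2)^2)^k'"
        using \<open>k \<le> k'\<close> by (intro power_increasing) (simp_all add: one_le_power)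
      ultimately show "\<rho> \<beta> y \<le> ((real N + 2)^2)^k' * \<rho> \<beta> x"
        using k by (meson mult_right_mono order_trans)
    qed
  qed
  then have "eventually (\<lambda>k. \<forall>y\<in>ground_configs N. \<forall>\<beta>>0. \<rho> \<beta> y \<le> ((real N + 2)^2)^k * \<rho> \<beta> x) sequentially"
    by (intro eventually_ball_finite) (auto simp: ground_configs_def finite_configs)
  then show ?thesis by (auto simp: eventually_sequentially)
qed

lemma eventually_heavy_ground_config:
  "eventually (\<lambda>\<beta>. \<exists>y\<in>ground_configs N. 1 / real (card (configs N)) \<le> \<rho> \<beta> y) at_top"
proof -
  define a where "a = min muL (- muR) / 2"
  have "interior_config {} \<in> configs N"
    using interior_config_in_ground_configs[OF two_le_N] by (auto simp: ground_configs_def)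
  then have "0 < 1 / real (card (configs N))"
    using finite_configs card_gt_0_iff by fastforce
  moreover have "0 < a" using muL_pos muR_neg by (simp add: a_def)
  ultimately have "eventually (\<lambda>\<beta>. (real N + 2)^2 * exp (- (\<beta> * a)) < 1 / real (card (configs N))) at_top"
    by (intro order_tendstoD(2)[OF tendsto_exp_decay])
  with eventually_gt_at_top[of 0] show ?thesis
  proof eventually_elim
    case (elim \<beta>)
    then obtain y where y: "y \<in> configs N" "1 / real (card (configs N)) \<le> \<rho> \<beta> y"
      using stationary_exists_ge_inverse_card[OF stationary_family] by blast
    have "y \<in> ground_configs N"
      using exclusion_stationary.mass_non_ground_le[OF stationary_at y(1)] elim y(2)
      unfolding a_def by fastforce
    with y(2) show ?case by blast
  qed
qed

lemma ground_lower_bound: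
  assumes "x \<in> ground_configs N"
  shows "\<exists>m>0. eventually (\<lambda>\<beta>. m \<le> \<rho> \<beta> x) at_top"
proof -
  let ?D = "(real N + 2)^2" and ?M = "real (card (configs N))"
  obtain K where K: "\<And>y \<beta>. y \<in> ground_configs N \<Longrightarrow> 0 < \<beta> \<Longrightarrow> \<rho> \<beta> y \<le> ?D^K * \<rho> \<beta> x"
    using ground_ratio_uniform[OF assms] by blast
  have "eventually (\<lambda>\<beta>. 1 / ?M / ?D^K \<le> \<rho> \<beta> x) at_top"
    using eventually_heavy_ground_config eventually_gt_at_top[of 0]
  proof eventually_elim
    case (elim \<beta>)
    then obtain y where "y \<in> ground_configs N" "1 / ?M \<le> \<rho> \<beta> y" by blast
    then have "1 / ?M \<le> ?D^K * \<rho> \<beta> x" using K elim(2) by force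
    then show ?case
      using pos_divide_le_eq[of "?D^K" "1 / ?M" "\<rho> \<beta> x"] by (simp add: mult.commute)
  qed
  moreover have "0 < 1 / ?M / ?D^K"
    using finite_configs assms card_gt_0_iff[of "configs N"] by (fastforce simp: ground_configs_def)
  ultimately show ?thesis by blast
qed

lemma non_ground_decay:
  assumes "x \<in> configs N" "x \<notin> ground_configs N"
  shows "eventually (\<lambda>\<beta>. 0 < \<rho> \<beta> x \<and> \<rho> \<beta> x \<le> (real N + 2)^2 * exp (- (\<beta> * (min muL (- muR) / 2)))) at_top"
proof -
  have "eventually (\<lambda>\<beta>. \<forall>w\<in>ground_configs N. 0 < \<rho> \<beta> w) at_top"
  proof (intro eventually_ball_finite ballI)
    show "finite (ground_configs N)" by (simp add: ground_configs_def finite_configs)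
  next
    fix w assume "w \<in> ground_configs N"
    then obtain m where "0 < m" "eventually (\<lambda>\<beta>. m \<le> \<rho> \<beta> w) at_top"
      using ground_lower_bound by blast
    then show "eventually (\<lambda>\<beta>. 0 < \<rho> \<beta> w) at_top" by (auto elim: eventually_mono)
  qed
  with eventually_gt_at_top[of 0] show ?thesis
    by eventually_elim (use assms exclusion_stationary.pos_if_ground_pos[OF stationary_at]
        exclusion_stationary.mass_non_ground_le[OF stationary_at] in blast)
qed

end

theorem theorem6p1:
  fixes N :: nat and muL muR :: real
    and \<rho> :: "real \<Rightarrow> (nat \<Rightarrow> bool) \<Rightarrow> real"
    and x :: "nat \<Rightarrow> bool"
  assumes "N \<ge> 2"
    and "muL > 0" and "muR < 0"
    and "\<And>\<beta>. \<beta> > 0 \<Longrightarrow> stationary N \<beta> muL muR (\<rho> \<beta>)"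
    and "x \<in> configs N"
  shows "asymp_one (\<lambda>\<beta>. \<rho> \<beta> x) \<longleftrightarrow> (x 1 \<and> \<not> x N)"
proof -
  interpret exclusion_stationary_family N muL muR \<rho>
    using assms(1-4) by unfold_locales
  have "x 1 \<and> \<not> x N \<longleftrightarrow> x \<in> ground_configs N"
    using assms(5) by (simp add: ground_configs_def)
  moreover have "asymp_one (\<lambda>\<beta>. \<rho> \<beta> x)" if ground: "x \<in> ground_configs N"
  proof -
    obtain m where "0 < m" "eventually (\<lambda>\<beta>. m \<le> \<rho> \<beta> x) at_top"
      using ground_lower_bound[OF ground] by blast
    moreover have "eventually (\<lambda>\<beta>. \<rho> \<beta> x \<le> 1) at_top"
      using eventually_gt_at_top[of 0]
      by eventually_elim (use stationary_le_1[OF stationary_family assms(5)] in blast)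
    ultimately show ?thesis
      by (intro asymp_one_if_bounded[of m]) (auto elim: eventually_elim2)
  qed
  moreover have "\<not> asymp_one (\<lambda>\<beta>. \<rho> \<beta> x)" if "x \<notin> ground_configs N"
    using muL_pos muR_neg
    by (intro not_asymp_one_if_exp_decay[OF _ non_ground_decay[OF assms(5) that]]) simp
  ultimately show ?thesis by blast
qed

end
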